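(* Let $A\in\mathbb{R}^{m\times N}$, $q\in(1,\infty]$, and let $x\in\mathbb{R}^N$ be a nonzero $k$-sparse vector such that $$k<\inf_{h\in\ker(A)\setminus\{0\}}3^{\frac{q}{1-q}}s_q(h).$$ Then $x$ is the unique solution of $\min_{z\in\mathbb{R}^N\setminus\{0\}}\lVert z\rVert_1/\lVert z\rVert_q$ subject to $Az=Ax$.
   Context: For nonzero $h\in\mathbb{R}^N$ and $q\in(1,\infty)$, $s_q(h)=\left(\lVert h\rVert_1/\lVert h\rVert_q\right)^{q/(q-1)}$, and $s_\infty(h)=\lVert h\rVert_1/\lVert h\rVert_\infty$; for $q=\infty$ the factor $3^{q/(1-q)}$ is interpreted as $3^{-1}$. $\ker(A)=\{h: Ah=0\}$. A vector is $k$-sparse if it has at most $k$ nonzero entries. *)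

theory Defs
  imports "HOL-Analysis.Analysis"
begin

definition l1_norm :: "real ^ 'n \<Rightarrow> real" where
  "l1_norm h = (\<Sum>i\<in>UNIV. \<bar>h $ i\<bar>)"

definition lq_norm :: "ereal \<Rightarrow> real ^ 'n \<Rightarrow> real" where
  "lq_norm q h = (if q = \<infinity> then Max (range (\<lambda>i. \<bar>h $ i\<bar>))
                  else (\<Sum>i\<in>UNIV. \<bar>h $ i\<bar> powr real_of_ereal q) powr (1 / real_of_ereal q))"

definition s_q :: "ereal \<Rightarrow> real ^ 'n \<Rightarrow> real" where
  "s_q q h = (if q = \<infinity> then l1_norm h / lq_norm q h
              else (l1_norm h / lq_norm q h) powr (real_of_ereal q / (real_of_ereal q - 1)))"

definition three_factor :: "ereal \<Rightarrow> real" where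
  "three_factor q = (if q = \<infinity> then 1 / 3
                     else 3 powr (real_of_ereal q / (1 - real_of_ereal q)))"

definition kernel :: "real ^ 'n ^ 'm \<Rightarrow> (real ^ 'n) set" where
  "kernel A = {h. A *v h = 0}"

definition sparse :: "nat \<Rightarrow> real ^ 'n \<Rightarrow> bool" where
  "sparse k x \<longleftrightarrow> card {i. x $ i \<noteq> 0} \<le> k"

end

theory Submission
  imports Defs
begin

text \<open>
  Let \<open>S\<close> be the support of \<open>x\<close> and \<open>c = k\<^sup>1\<^sup>-\<^sup>1\<^sup>/\<^sup>q\<close>. By Hoelder's inequality
  \<open>\<parallel>h\<^sub>S\<parallel>\<^sub>1 \<le> c \<parallel>h\<parallel>\<^sub>q\<close> for every \<open>h\<close>, and the hypothesis on \<open>k\<close> is exactly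
  \<open>\<parallel>h\<parallel>\<^sub>1 > 3 c \<parallel>h\<parallel>\<^sub>q\<close> for nonzero \<open>h\<close> in the kernel. For a feasible \<open>w = x + h\<close>,
  \<open>\<parallel>w\<parallel>\<^sub>1 \<ge> \<parallel>x\<parallel>\<^sub>1 + \<parallel>h\<parallel>\<^sub>1 - 2 \<parallel>h\<^sub>S\<parallel>\<^sub>1 > \<parallel>x\<parallel>\<^sub>1 + c \<parallel>h\<parallel>\<^sub>q\<close>, while Minkowski's inequality
  gives \<open>\<parallel>w\<parallel>\<^sub>q \<le> \<parallel>x\<parallel>\<^sub>q + \<parallel>h\<parallel>\<^sub>q\<close>; together with \<open>\<parallel>x\<parallel>\<^sub>1 \<le> c \<parallel>x\<parallel>\<^sub>q\<close> this yields
  \<open>\<parallel>x\<parallel>\<^sub>1 \<parallel>w\<parallel>\<^sub>q < \<parallel>w\<parallel>\<^sub>1 \<parallel>x\<parallel>\<^sub>q\<close>.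
\<close>

lemma convex_on_powr_nonneg:
  fixes p :: real
  assumes "1 \<le> p"
  shows "convex_on {0..} (\<lambda>x. x powr p)"
proof (rule convex_onI)
  fix t u v :: real
  assume t: "0 < t" "t < 1" and uv: "u \<in> {0..}" "v \<in> {0..}"
  have scale: "(s * y) powr p \<le> s * y powr p" if "0 \<le> s" "s \<le> 1" "0 \<le> y" for s y :: real
  proof -
    have "s powr p \<le> s powr 1"
      using that assms by (intro powr_mono') auto
    then show ?thesis
      using that by (simp add: powr_mult mult_right_mono)
  qed
  show "((1 - t) *\<^sub>R u + t *\<^sub>R v) powr p \<le> (1 - t) * u powr p + t * v powr p"
  proof (cases "u = 0 \<or> v = 0")
    case True
    then show ?thesis
      using scale[of t v] scale[of "1 - t" u] t uv by auto
  next
    case False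
    then show ?thesis
      using convex_onD[OF powr_convex[OF assms], of t u v] t uv by simp
  qed
qed (rule convex_real_interval)

lemma member_le_root_sum_powr:
  fixes f :: "'a \<Rightarrow> real"
  assumes "finite I" "i \<in> I" "\<And>j. j \<in> I \<Longrightarrow> 0 \<le> f j" "0 < p"
  shows "f i \<le> (\<Sum>j\<in>I. f j powr p) powr (1 / p)"
proof -
  have "f i = (f i powr p) powr (1 / p)"
    using assms by (simp add: powr_powr)
  also have "\<dots> \<le> (\<Sum>j\<in>I. f j powr p) powr (1 / p)"
    using assms by (intro powr_mono2 member_le_sum) auto
  finally show ?thesis .
qed

lemma root_sum_powr_powr:
  fixes f :: "'a \<Rightarrow> real"
  assumes "0 < p"
  shows "((\<Sum>i\<in>I. f i powr p) powr (1 / p)) powr p = (\<Sum>i\<in>I. f i powr p)"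
  using assms by (simp add: powr_powr sum_nonneg)

lemma powr_add_divide_add_le:
  fixes a b F G p :: real
  assumes "0 \<le> a" "0 \<le> b" "0 < F" "0 < G" "1 \<le> p"
  shows "((a + b) / (F + G)) powr p \<le> F / (F + G) * (a / F) powr p + G / (F + G) * (b / G) powr p"
proof -
  define t where "t = G / (F + G)"
  have t: "0 \<le> t" "t \<le> 1" "1 - t = F / (F + G)"
    using assms by (auto simp: t_def field_simps)
  have "(a + b) / (F + G) = (1 - t) * (a / F) + t * (b / G)"
    unfolding t(3) unfolding t_def using assms by (simp add: add_divide_distrib)
  then show ?thesis
    using convex_onD[OF convex_on_powr_nonneg[OF assms(5)], of t "a / F" "b / G"] t assms
    by (simp add: t_def)
qed

lemma Minkowski_inequality_sum:
  fixes f g :: "'a \<Rightarrow> real"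
  assumes I: "finite I" and f: "\<And>i. i \<in> I \<Longrightarrow> 0 \<le> f i" and g: "\<And>i. i \<in> I \<Longrightarrow> 0 \<le> g i"
    and p: "1 \<le> p"
  shows "(\<Sum>i\<in>I. (f i + g i) powr p) powr (1 / p)
           \<le> (\<Sum>i\<in>I. f i powr p) powr (1 / p) + (\<Sum>i\<in>I. g i powr p) powr (1 / p)"
proof -
  define F where "F = (\<Sum>i\<in>I. f i powr p) powr (1 / p)"
  define G where "G = (\<Sum>i\<in>I. g i powr p) powr (1 / p)"
  have f_le: "f i \<le> F" and g_le: "g i \<le> G" if "i \<in> I" for i
    unfolding F_def G_def using that I f g p by (auto intro: member_le_root_sum_powr)
  consider "F = 0" | "G = 0" | "0 < F" "0 < G"
    unfolding F_def G_def by fastforce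
  then show ?thesis
  proof cases
    case 1
    then have "f i = 0" if "i \<in> I" for i
      using f_le f that by fastforce
    then show ?thesis by (simp add: 1 F_def[symmetric] G_def[symmetric])
  next
    case 2
    then have "g i = 0" if "i \<in> I" for i
      using g_le g that by fastforce
    then show ?thesis by (simp add: 2 F_def[symmetric] G_def[symmetric])
  next
    case 3
    have "(\<Sum>i\<in>I. (f i + g i) powr p) / (F + G) powr p = (\<Sum>i\<in>I. ((f i + g i) / (F + G)) powr p)"
      by (simp add: powr_divide sum_divide_distrib)
    also have "\<dots> \<le> (\<Sum>i\<in>I. F / (F + G) * (f i / F) powr p + G / (F + G) * (g i / G) powr p)"
      using 3 f g p by (intro sum_mono powr_add_divide_add_le) auto
    also have "\<dots> = F / (F + G) * ((\<Sum>i\<in>I. f i powr p) / F powr p)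
                      + G / (F + G) * ((\<Sum>i\<in>I. g i powr p) / G powr p)"
      by (simp add: powr_divide sum.distrib sum_distrib_left sum_divide_distrib)
    also have "\<dots> = 1"
      using 3 p root_sum_powr_powr[of p f I, folded F_def, symmetric]
        root_sum_powr_powr[of p g I, folded G_def, symmetric]
      by (simp add: add_divide_distrib[symmetric])
    finally have "(\<Sum>i\<in>I. (f i + g i) powr p) \<le> (F + G) powr p"
      using 3 by simp
    then have "(\<Sum>i\<in>I. (f i + g i) powr p) powr (1 / p) \<le> ((F + G) powr p) powr (1 / p)"
      using p by (intro powr_mono2) (auto intro: sum_nonneg)
    also have "\<dots> = F + G"
      using 3 p by (simp add: powr_powr)
    finally show ?thesis by (simp add: F_def G_def)
  qed
qed

lemma sum_le_card_powr_root_sum_powr: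
  fixes a :: "'a \<Rightarrow> real"
  assumes S: "finite S" and a: "\<And>i. i \<in> S \<Longrightarrow> 0 \<le> a i" and p: "1 \<le> p"
  shows "sum a S \<le> real (card S) powr (1 - 1 / p) * (\<Sum>i\<in>S. a i powr p) powr (1 / p)"
proof (cases "S = {}")
  case False
  define n where "n = real (card S)"
  have n: "0 < n" using S False by (simp add: n_def card_gt_0_iff)
  have "(sum a S / n) powr p = (\<Sum>i\<in>S. (1 / n) *\<^sub>R a i) powr p"
    by (simp add: sum_divide_distrib)
  also have "\<dots> \<le> (\<Sum>i\<in>S. (1 / n) * a i powr p)"
    using S False a n by (intro convex_on_sum[OF _ _ convex_on_powr_nonneg[OF p]]) (auto simp: n_def)
  finally have Jensen: "(sum a S / n) powr p \<le> (\<Sum>i\<in>S. a i powr p) / n"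
    by (simp add: sum_divide_distrib)
  have "(sum a S) powr p = n powr p * (sum a S / n) powr p"
    using n by (simp add: powr_divide)
  also have "\<dots> \<le> n powr p * ((\<Sum>i\<in>S. a i powr p) / n)"
    using Jensen by (intro mult_left_mono) auto
  also have "\<dots> = n powr (p - 1) * (\<Sum>i\<in>S. a i powr p)"
    using n by (simp add: powr_diff)
  finally have "((sum a S) powr p) powr (1 / p) \<le> (n powr (p - 1) * (\<Sum>i\<in>S. a i powr p)) powr (1 / p)"
    using p by (intro powr_mono2) auto
  moreover have "((sum a S) powr p) powr (1 / p) = sum a S"
    using p a by (simp add: powr_powr sum_nonneg)
  moreover have "(n powr (p - 1)) powr (1 / p) = n powr (1 - 1 / p)"
    using p by (simp add: powr_powr diff_divide_distrib)
  ultimately show ?thesis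
    using n by (simp add: powr_mult n_def)
qed simp

lemma ereal_gt_one_cases:
  assumes "1 < q"
  obtains "q = \<infinity>" | p where "q = ereal p" "1 < p"
  using assms by (cases q) auto

lemma abs_le_lq_norm:
  assumes "1 < q"
  shows "\<bar>h $ i\<bar> \<le> lq_norm q h"
  using assms
proof (cases rule: ereal_gt_one_cases)
  case 1
  then show ?thesis by (simp add: lq_norm_def)
next
  case (2 p)
  then show ?thesis
    using member_le_root_sum_powr[of UNIV i "\<lambda>j. \<bar>h $ j\<bar>" p] by (simp add: lq_norm_def)
qed

lemma lq_norm_nonneg: "1 < q \<Longrightarrow> 0 \<le> lq_norm q h"
  using abs_le_lq_norm abs_ge_zero order_trans by metis

lemma lq_norm_pos:
  assumes "1 < q" "h \<noteq> 0"
  shows "0 < lq_norm q h"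
proof -
  obtain i where "h $ i \<noteq> 0"
    using assms(2) by (auto simp: vec_eq_iff)
  then show ?thesis
    using abs_le_lq_norm[OF assms(1), of h i] by linarith
qed

lemma lq_norm_triangle:
  assumes "1 < q"
  shows "lq_norm q (a + b) \<le> lq_norm q a + lq_norm q b"
  using assms
proof (cases rule: ereal_gt_one_cases)
  case 1
  have "\<bar>(a + b) $ i\<bar> \<le> lq_norm q a + lq_norm q b" for i
    using abs_triangle_ineq[of "a $ i" "b $ i"] abs_le_lq_norm[OF assms, of a i]
      abs_le_lq_norm[OF assms, of b i] by simp
  then show ?thesis
    using 1 by (simp add: lq_norm_def)
next
  case (2 p)
  have "lq_norm q (a + b) \<le> (\<Sum>i\<in>UNIV. (\<bar>a $ i\<bar> + \<bar>b $ i\<bar>) powr p) powr (1 / p)"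
    unfolding 2 lq_norm_def using 2
    by (auto intro!: powr_mono2 sum_mono sum_nonneg simp: abs_triangle_ineq)
  also have "\<dots> \<le> lq_norm q a + lq_norm q b"
    unfolding 2 lq_norm_def using 2 by (simp add: Minkowski_inequality_sum)
  finally show ?thesis .
qed

text \<open>For \<open>q = \<infinity>\<close> the exponent reads \<open>1 - 1 / 0 = 1\<close>, since \<open>real_of_ereal \<infinity> = 0\<close>.\<close>
lemma sum_abs_le_lq_norm:
  assumes q: "1 < q" and S: "card S \<le> k"
  shows "(\<Sum>i\<in>S. \<bar>h $ i\<bar>) \<le> real k powr (1 - 1 / real_of_ereal q) * lq_norm q h"
  using q
proof (cases rule: ereal_gt_one_cases)
  case 1
  have "(\<Sum>i\<in>S. \<bar>h $ i\<bar>) \<le> (\<Sum>i\<in>S. lq_norm q h)"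
    by (rule sum_mono) (rule abs_le_lq_norm[OF q])
  also have "\<dots> = real (card S) * lq_norm q h"
    by simp
  also have "\<dots> \<le> real k * lq_norm q h"
    using S lq_norm_nonneg[OF q] by (intro mult_right_mono) auto
  finally show ?thesis
    using 1 by simp
next
  case (2 p)
  have "(\<Sum>i\<in>S. \<bar>h $ i\<bar>)
          \<le> real (card S) powr (1 - 1 / p) * (\<Sum>i\<in>S. \<bar>h $ i\<bar> powr p) powr (1 / p)"
    using 2 by (intro sum_le_card_powr_root_sum_powr) auto
  also have "\<dots> \<le> real k powr (1 - 1 / p) * (\<Sum>i\<in>UNIV. \<bar>h $ i\<bar> powr p) powr (1 / p)"
    using 2 S by (intro mult_mono powr_mono2 sum_mono2) (auto intro: sum_nonneg)
  finally show ?thesis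
    using 2 by (simp add: lq_norm_def)
qed

lemma l1_norm_gt_of_three_factor_s_q:
  assumes q: "1 < q" and h: "0 < lq_norm q h" and a: "0 \<le> a"
    and less: "a < three_factor q * s_q q h"
  shows "3 * a powr (1 - 1 / real_of_ereal q) * lq_norm q h < l1_norm h"
  using q
proof (cases rule: ereal_gt_one_cases)
  case 1
  then show ?thesis
    using less h a by (simp add: three_factor_def s_q_def field_simps)
next
  case (2 p)
  define R where "R = l1_norm h / lq_norm q h"
  define e where "e = p / (p - 1)"
  have e: "0 < e" "1 / e = 1 - 1 / p"
    using 2 by (auto simp: e_def field_simps)
  have R: "0 \<le> R"
    using h by (simp add: R_def l1_norm_def sum_nonneg)
  have "three_factor q = 1 / 3 powr e"
    using 2 by (simp add: three_factor_def e_def powr_minus_divide[symmetric] minus_divide_right)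
  then have "a < (R / 3) powr e"
    using less 2 by (simp add: s_q_def R_def e_def powr_divide powr_mult mult_ac)
  then have "a powr (1 / e) < ((R / 3) powr e) powr (1 / e)"
    using e(1) a by (intro powr_less_mono2) auto
  also have "\<dots> = R / 3"
    using e(1) R by (simp add: powr_powr)
  finally show ?thesis
    using h 2 e by (simp add: R_def field_simps)
qed

lemma l1_norm_nonneg: "0 \<le> l1_norm h"
  by (simp add: l1_norm_def sum_nonneg)

lemma l1_norm_eq_sum_support: "l1_norm x = (\<Sum>i\<in>{i. x $ i \<noteq> 0}. \<bar>x $ i\<bar>)"
  unfolding l1_norm_def by (rule sum.mono_neutral_right) auto

lemma l1_norm_add_ge:
  fixes x h :: "real ^ 'n"
  shows "l1_norm x + l1_norm h - 2 * (\<Sum>i\<in>{i. x $ i \<noteq> 0}. \<bar>h $ i\<bar>) \<le> l1_norm (x + h)"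
proof -
  define S where "S = {i. x $ i \<noteq> 0}"
  have split: "l1_norm v = (\<Sum>i\<in>UNIV - S. \<bar>v $ i\<bar>) + (\<Sum>i\<in>S. \<bar>v $ i\<bar>)" for v :: "real ^ 'n"
    unfolding l1_norm_def by (rule sum.subset_diff) auto
  have "(\<Sum>i\<in>S. \<bar>x $ i\<bar>) - (\<Sum>i\<in>S. \<bar>h $ i\<bar>) \<le> (\<Sum>i\<in>S. \<bar>(x + h) $ i\<bar>)"
    unfolding sum_subtractf[symmetric] by (rule sum_mono) (simp add: abs_triangle_ineq4)
  moreover have "(\<Sum>i\<in>UNIV - S. \<bar>(x + h) $ i\<bar>) = (\<Sum>i\<in>UNIV - S. \<bar>h $ i\<bar>)"
    by (rule sum.cong) (auto simp: S_def)
  moreover have "(\<Sum>i\<in>UNIV - S. \<bar>x $ i\<bar>) = 0"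
    by (rule sum.neutral) (auto simp: S_def)
  ultimately show ?thesis
    using split[of x] split[of h] split[of "x + h"] unfolding S_def by linarith
qed

lemma l1_ratio_less_of_null_space_property:
  fixes N :: "real ^ 'n \<Rightarrow> real"
  assumes support: "\<And>v. (\<Sum>i\<in>{i. x $ i \<noteq> 0}. \<bar>v $ i\<bar>) \<le> c * N v"
    and null_space: "3 * c * N (w - x) < l1_norm (w - x)"
    and triangle: "N w \<le> N x + N (w - x)"
    and pos: "0 < N x" "0 < N w" "0 \<le> N (w - x)"
  shows "l1_norm x / N x < l1_norm w / N w"
proof -
  define h where "h = w - x"
  have w: "x + h = w"
    by (simp add: h_def)
  have x_bound: "l1_norm x \<le> c * N x"
    using support[of x] by (simp add: l1_norm_eq_sum_support)
  have w_bound: "l1_norm x + c * N h < l1_norm w"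
    using l1_norm_add_ge[of x h] support[of h] null_space unfolding w h_def[symmetric] by linarith
  have "l1_norm x * N w \<le> l1_norm x * N x + l1_norm x * N h"
    using triangle l1_norm_nonneg[of x] by (simp add: h_def distrib_left[symmetric] mult_left_mono)
  also have "\<dots> \<le> l1_norm x * N x + c * N x * N h"
    using x_bound pos(3) by (simp add: h_def mult_right_mono)
  also have "\<dots> = (l1_norm x + c * N h) * N x"
    by (simp add: algebra_simps)
  also have "\<dots> < l1_norm w * N x"
    using w_bound pos(1) by (simp add: mult_strict_right_mono)
  finally show ?thesis
    using pos by (simp add: divide_simps)
qed

lemma set_of_minimizers_eq_singleton:
  fixes f :: "'a \<Rightarrow> 'b :: order"
  assumes "P x" and "\<And>w. P w \<Longrightarrow> w \<noteq> x \<Longrightarrow> f x < f w"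
  shows "{z. P z \<and> (\<forall>w. P w \<longrightarrow> f z \<le> f w)} = {x}"
proof -
  have "z = x" if "P z" "\<forall>w. P w \<longrightarrow> f z \<le> f w" for z
    using that assms by (meson leD)
  moreover have "f x \<le> f w" if "P w" for w
    using assms that by (cases "w = x") (auto intro: less_imp_le)
  ultimately show ?thesis
    using assms(1) by blast
qed

theorem proposition3:
  fixes A :: "real ^ 'n ^ 'm" and q :: ereal and x :: "real ^ 'n" and k :: nat
  assumes q: "1 < q"
    and x_nz: "x \<noteq> 0"
    and x_sparse: "sparse k x"
    and hk: "ereal (real k) < (INF h \<in> kernel A - {0}. ereal (three_factor q * s_q q h))"
  shows "{z. z \<noteq> 0 \<and> A *v z = A *v x \<and>
             (\<forall>w. w \<noteq> 0 \<and> A *v w = A *v x \<longrightarrow>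
                  l1_norm z / lq_norm q z \<le> l1_norm w / lq_norm q w)} = {x}"
proof -
  define c where "c = real k powr (1 - 1 / real_of_ereal q)"
  have support: "(\<Sum>i\<in>{i. x $ i \<noteq> 0}. \<bar>v $ i\<bar>) \<le> c * lq_norm q v" for v
  proof -
    have "card {i. x $ i \<noteq> 0} \<le> k"
      using x_sparse by (simp add: sparse_def)
    then show ?thesis
      unfolding c_def by (rule sum_abs_le_lq_norm[OF q])
  qed
  have null_space: "3 * c * lq_norm q h < l1_norm h" if h: "h \<in> kernel A - {0}" for h
  proof -
    have "ereal (real k) < ereal (three_factor q * s_q q h)"
      using hk INF_lower[OF h] by (rule less_le_trans)
    then show ?thesis
      unfolding c_def using h lq_norm_pos[OF q] by (intro l1_norm_gt_of_three_factor_s_q[OF q]) auto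
  qed
  have strict: "l1_norm x / lq_norm q x < l1_norm w / lq_norm q w"
    if w: "w \<noteq> 0" "A *v w = A *v x" "w \<noteq> x" for w
  proof -
    have "w - x \<in> kernel A - {0}"
      using w by (simp add: kernel_def matrix_vector_mult_diff_distrib)
    then show ?thesis
      by (rule l1_ratio_less_of_null_space_property[OF support null_space _
            lq_norm_pos[OF q x_nz] lq_norm_pos[OF q w(1)] lq_norm_nonneg[OF q]])
        (use lq_norm_triangle[OF q, of x "w - x"] in simp)
  qed
  show ?thesis
    unfolding conj_assoc[symmetric]
    by (rule set_of_minimizers_eq_singleton) (use x_nz strict in auto)
qed

end
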